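(* Let $R$ be a weakly $r$-clean ring whose only idempotents are $0$ and $1$. Then the center $Z(R)=\{z\in R: zx=xz \text{ for all } x\in R\}$ of $R$ is a weakly $r$-clean ring.
   Context: Rings are associative with identity. $Idem(R)$ denotes the idempotents of $R$ and $Reg(R)=\{r\in R:\ r=ryr \text{ for some } y\in R\}$ its regular elements. An element $x\in R$ is weakly $r$-clean if $x=r+e$ or $x=r-e$ for some $r\in Reg(R)$, $e\in Idem(R)$; $R$ is weakly $r$-clean if all its elements are weakly $r$-clean. *)

theory Defs
  imports Main
begin

text \<open>Notions relative to a subset S of a ring (S is meant to be a subring,
  e.g. UNIV or the center), so that the center can be treated as a ring in its own right.\<close>

definition Idem_in :: "'a::ring_1 set \<Rightarrow> 'a set" where
  "Idem_in S = {e \<in> S. e * e = e}"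

definition Reg_in :: "'a::ring_1 set \<Rightarrow> 'a set" where
  "Reg_in S = {r \<in> S. \<exists>y\<in>S. r = r * y * r}"

definition weakly_r_clean_in :: "'a::ring_1 set \<Rightarrow> 'a \<Rightarrow> bool" where
  "weakly_r_clean_in S x \<longleftrightarrow>
     (\<exists>r\<in>Reg_in S. \<exists>e\<in>Idem_in S. x = r + e \<or> x = r - e)"

definition weakly_r_clean_ring_on :: "'a::ring_1 set \<Rightarrow> bool" where
  "weakly_r_clean_ring_on S \<longleftrightarrow> (\<forall>x\<in>S. weakly_r_clean_in S x)"

definition center :: "'a::ring_1 set" where
  "center = {z. \<forall>x. z * x = x * z}"

end

theory Submission
  imports Defs
begin

text \<open>If 0 and 1 are the only idempotents, they are central, and a regular element r = r y r
  either is 0 or has the idempotent r y equal to 1, so it is a unit; for central r its inverse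
  is central too, making r regular inside the center. A decomposition z = r \<plusminus> e of a central
  z then has both r = z \<mp> e and e central, hence is a decomposition within the center.\<close>

lemma zero_mem_center: "0 \<in> center"
  by (simp add: center_def)

lemma one_mem_center: "1 \<in> center"
  by (simp add: center_def)

lemma add_mem_center: "a \<in> center \<Longrightarrow> b \<in> center \<Longrightarrow> a + b \<in> center"
  by (simp add: center_def algebra_simps)

lemma diff_mem_center: "a \<in> center \<Longrightarrow> b \<in> center \<Longrightarrow> a - b \<in> center"
  by (simp add: center_def algebra_simps)

lemma inverse_mem_center:
  fixes a y :: "'a::ring_1"
  assumes a: "a \<in> center" and ay: "a * y = 1" and ya: "y * a = 1"
  shows "y \<in> center"
proof -
  have "y * x = x * y" for x
  proof -
    have "y * x = y * x * (a * y)" using ay by simp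
    also have "\<dots> = y * (x * a) * y" by (simp add: mult.assoc)
    also have "\<dots> = y * (a * x) * y" using a by (simp add: center_def)
    also have "\<dots> = (y * a) * x * y" by (simp add: mult.assoc)
    also have "\<dots> = x * y" using ya by simp
    finally show ?thesis .
  qed
  then show ?thesis by (simp add: center_def)
qed

lemma Idem_in_center_if_trivial_idempotents:
  assumes "Idem_in (UNIV :: 'a::ring_1 set) \<subseteq> {0, 1}"
  shows "Idem_in (center :: 'a set) = Idem_in UNIV"
  using assms zero_mem_center one_mem_center by (auto simp: Idem_in_def)

lemma Reg_in_center_if_trivial_idempotents:
  fixes a :: "'a::ring_1"
  assumes idem: "Idem_in (UNIV :: 'a set) \<subseteq> {0, 1}"
    and a_center: "a \<in> center" and a_reg: "a \<in> Reg_in UNIV"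
  shows "a \<in> Reg_in center"
proof -
  obtain y where y: "a = a * y * a"
    using a_reg by (auto simp: Reg_in_def)
  have "a * y * (a * y) = a * y"
    using y by (metis mult.assoc)
  then have "a * y = 0 \<or> a * y = 1"
    using idem by (auto simp: Idem_in_def)
  then show ?thesis
  proof
    assume "a * y = 0"
    then have "a = 0" using y by simp
    then show ?thesis using zero_mem_center by (auto simp: Reg_in_def)
  next
    assume ay: "a * y = 1"
    then have "y * a = 1" using a_center by (simp add: center_def)
    then have "y \<in> center" using inverse_mem_center a_center ay by blast
    then show ?thesis using a_center y by (auto simp: Reg_in_def)
  qed
qed

theorem theorem2p17:
  assumes "weakly_r_clean_ring_on (UNIV :: 'a::ring_1 set)"
    and "Idem_in (UNIV :: 'a set) = {0, 1}"
  shows "weakly_r_clean_ring_on (center :: 'a set)"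
  unfolding weakly_r_clean_ring_on_def
proof
  fix z :: 'a
  assume z: "z \<in> center"
  obtain r e where r: "r \<in> Reg_in UNIV" and e: "e \<in> Idem_in UNIV"
    and z_eq: "z = r + e \<or> z = r - e"
    using assms(1) unfolding weakly_r_clean_ring_on_def weakly_r_clean_in_def by blast
  have idem: "Idem_in (UNIV :: 'a set) \<subseteq> {0, 1}" using assms(2) by simp
  have e_center: "e \<in> Idem_in center"
    using e Idem_in_center_if_trivial_idempotents[OF idem] by simp
  then have "e \<in> center" by (simp add: Idem_in_def)
  moreover have "r = z - e \<or> r = z + e" using z_eq by auto
  ultimately have "r \<in> center"
    using z diff_mem_center add_mem_center by auto
  then have "r \<in> Reg_in center"
    using Reg_in_center_if_trivial_idempotents[OF idem] r by blast
  then show "weakly_r_clean_in center z"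
    using e_center z_eq unfolding weakly_r_clean_in_def by blast
qed

end
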